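(* Let $R>0$, $b\in\mathbb{R}^n\setminus\{0\}$, $a=\frac{|b|^2-R^2}{|b|^2}b$, and on $P=\{x:2|b|^2-R^2-2\langle b,x\rangle>0\}$ let $f(x)=\frac{|b|^2|x-a|^2}{2|b|^2-R^2-2\langle b,x\rangle}$. Let $k\ge2$ and let $\Sigma$ be a smooth $k$-dimensional submanifold of $P\setminus\{a\}$. Define on $\Sigma$ the vector field $$W(x)=\frac1k f(x)^{-\frac k2}(x-a)-F(f(x))\frac{b}{|b|^2},\qquad F(t)=\begin{cases}\frac{1}{k-2}t^{-\frac{k-2}{2}},&k\ge3,\\ -\frac12\log t,&k=2.\end{cases}$$ Then $$\operatorname{div}_\Sigma W=f^{-\frac k2}\frac{|(x-a)^\perp|^2}{|x-a|^2}+f^{-\frac{k-4}{2}}\frac{|b^\top|^2}{|b|^4|x-a|^2}.$$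
   Context: $\operatorname{div}_\Sigma X=\sum_{i=1}^k\langle D_{e_i}X,e_i\rangle$ for an orthonormal basis $e_i$ of $T_x\Sigma$ (tangential divergence of an ambient vector field along $\Sigma$). $X^\top$ is the orthogonal projection of $X$ onto $T_x\Sigma$ and $X^\perp=X-X^\top$. *)

theory Defs
  imports "HOL-Analysis.Analysis"
begin

definition ctr :: "real \<Rightarrow> 'a::euclidean_space \<Rightarrow> 'a" where
  "ctr R b = ((norm b ^ 2 - R ^ 2) / norm b ^ 2) *\<^sub>R b"

definition regP :: "real \<Rightarrow> 'a::euclidean_space \<Rightarrow> 'a set" where
  "regP R b = {x. 2 * norm b ^ 2 - R ^ 2 - 2 * (b \<bullet> x) > 0}"

definition ffun :: "real \<Rightarrow> 'a::euclidean_space \<Rightarrow> 'a \<Rightarrow> real" where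
  "ffun R b x = (norm b ^ 2 * norm (x - ctr R b) ^ 2) / (2 * norm b ^ 2 - R ^ 2 - 2 * (b \<bullet> x))"

definition Ffun :: "nat \<Rightarrow> real \<Rightarrow> real" where
  "Ffun k t = (if k \<ge> 3 then (1 / (real k - 2)) * t powr (- (real k - 2) / 2)
               else - (1 / 2) * ln t)"

definition Wfield :: "nat \<Rightarrow> real \<Rightarrow> 'a::euclidean_space \<Rightarrow> 'a \<Rightarrow> 'a" where
  "Wfield k R b x = ((1 / real k) * ffun R b x powr (- (real k / 2))) *\<^sub>R (x - ctr R b)
                    - (Ffun k (ffun R b x) / norm b ^ 2) *\<^sub>R b"

definition tproj :: "'a::euclidean_space set \<Rightarrow> 'a \<Rightarrow> 'a" where
  "tproj T v = (THE u. u \<in> T \<and> (\<forall>w\<in>T. (v - u) \<bullet> w = 0))"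

definition nproj :: "'a::euclidean_space set \<Rightarrow> 'a \<Rightarrow> 'a" where
  "nproj T v = v - tproj T v"

text \<open>Tangential divergence of an ambient field X at x along the k-plane spanned
  by the orthonormal basis B: sum of <D_e X, e>.\<close>
definition tdiv :: "'a::euclidean_space set \<Rightarrow> ('a \<Rightarrow> 'a) \<Rightarrow> 'a \<Rightarrow> real" where
  "tdiv B X x = (\<Sum>e\<in>B. frechet_derivative X (at x) e \<bullet> e)"

end

theory Submission
  imports Defs
begin

(* Write y = x - a, P = f(x) powr (-k/2) and s = f(x) / |b|^2.  The gradient of f is
   (2 f / |y|^2) (y + s b), and F'(t) = -t powr (-k/2) / 2 for every k >= 2, so the
   differential of W is P/k times the identity plus the rank-one map
   h |-> (P / |y|^2) <y + s b, h> (s b - y).  Its trace along k orthonormal vectors spanning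
   T is P + (P / |y|^2) (s^2 |b^T|^2 - |y^T|^2), the rank-one part being a difference of
   squares, and Pythagoras |y^T|^2 = |y|^2 - |y^perp|^2 turns this into the claimed formula. *)

lemma tproj_unique:
  fixes T :: "'a::euclidean_space set"
  assumes "subspace T" "u \<in> T" "\<forall>w\<in>T. (v - u) \<bullet> w = 0"
  shows "tproj T v = u"
proof -
  have "u' = u" if "u' \<in> T" "\<forall>w\<in>T. (v - u') \<bullet> w = 0" for u'
  proof -
    have "u - u' \<in> T" using assms that by (simp add: subspace_diff)
    then have "(u - u') \<bullet> (u - u') = (v - u') \<bullet> (u - u') - (v - u) \<bullet> (u - u')"
      by (simp add: algebra_simps inner_diff_left)
    also have "\<dots> = 0" using that assms \<open>u - u' \<in> T\<close> by simp
    finally show ?thesis by simp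
  qed
  then show ?thesis
    unfolding tproj_def using assms by (intro the1_equality) blast+
qed

lemma orthonormal_sum_inner:
  fixes B :: "'a::euclidean_space set"
  assumes "finite B" "pairwise orthogonal B" "\<forall>e\<in>B. norm e = 1" "e \<in> B"
  shows "(\<Sum>e'\<in>B. c e' *\<^sub>R e') \<bullet> e = c e"
proof -
  have "(\<Sum>e'\<in>B. c e' *\<^sub>R e') \<bullet> e = (\<Sum>e'\<in>B. if e' = e then c e else 0)"
    unfolding inner_sum_left
  proof (rule sum.cong[OF refl])
    fix e' assume "e' \<in> B"
    then show "(c e' *\<^sub>R e') \<bullet> e = (if e' = e then c e else 0)"
      using assms(2-4) by (auto simp: pairwise_def orthogonal_def norm_eq_1[symmetric])
  qed
  also have "\<dots> = c e" using assms(1,4) by simp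
  finally show ?thesis .
qed

lemma orthonormal_basis_projection:
  fixes B :: "'a::euclidean_space set" and v :: 'a
  assumes "finite B" "pairwise orthogonal B" "\<forall>e\<in>B. norm e = 1"
  defines "u \<equiv> \<Sum>e\<in>B. (v \<bullet> e) *\<^sub>R e"
  shows "u \<in> span B" and "\<forall>w\<in>span B. (v - u) \<bullet> w = 0"
proof -
  show "u \<in> span B" unfolding u_def by (intro span_sum span_scale span_base)
  have "orthogonal (v - u) e" if "e \<in> B" for e
    using orthonormal_sum_inner[OF assms(1-3) that, of "\<lambda>e. v \<bullet> e"]
    by (simp add: u_def orthogonal_def inner_diff_left)
  then show "\<forall>w\<in>span B. (v - u) \<bullet> w = 0"
    using orthogonal_to_span by (auto simp: orthogonal_def)
qed

lemma tproj_orthonormal_basis: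
  fixes B :: "'a::euclidean_space set"
  assumes "finite B" "pairwise orthogonal B" "\<forall>e\<in>B. norm e = 1" "span B = T"
  shows "tproj T v = (\<Sum>e\<in>B. (v \<bullet> e) *\<^sub>R e)"
  using tproj_unique orthonormal_basis_projection[OF assms(1-3)] assms(4) subspace_span by blast

lemma norm_tproj_power2:
  fixes B :: "'a::euclidean_space set"
  assumes "finite B" "pairwise orthogonal B" "\<forall>e\<in>B. norm e = 1" "span B = T"
  shows "norm (tproj T v) ^ 2 = (\<Sum>e\<in>B. (v \<bullet> e) ^ 2)"
proof -
  have "pairwise (\<lambda>e e'. orthogonal ((v \<bullet> e) *\<^sub>R e) ((v \<bullet> e') *\<^sub>R e')) B"
    using assms(2) by (auto simp: pairwise_def orthogonal_clauses)
  then show ?thesis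
    using assms by (simp add: tproj_orthonormal_basis norm_sum_Pythagorean power_mult_distrib)
qed

lemma norm_nproj_power2:
  fixes B :: "'a::euclidean_space set"
  assumes "finite B" "pairwise orthogonal B" "\<forall>e\<in>B. norm e = 1" "span B = T"
  shows "norm (nproj T v) ^ 2 = norm v ^ 2 - norm (tproj T v) ^ 2"
proof -
  have "orthogonal (tproj T v) (nproj T v)"
    using orthonormal_basis_projection[OF assms(1-3), of v]
    by (simp add: nproj_def tproj_orthonormal_basis[OF assms] orthogonal_def inner_commute)
  then show ?thesis
    using norm_add_Pythagorean by (fastforce simp: nproj_def)
qed

lemma card_orthonormal_eq_dim:
  fixes B :: "'a::euclidean_space set"
  assumes "pairwise orthogonal B" "\<forall>e\<in>B. norm e = 1"
  shows "card B = dim B"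
proof -
  have "0 \<notin> B" using assms(2) by force
  then show ?thesis
    using pairwise_orthogonal_independent assms(1) dim_eq_card_independent by metis
qed

lemma ffun_pos:
  assumes "b \<noteq> 0" "x \<in> regP R b" "x \<noteq> ctr R b"
  shows "ffun R b x > 0"
  using assms by (simp add: ffun_def regP_def)

lemma ffun_has_derivative:
  fixes b x :: "'a::euclidean_space"
  assumes "b \<noteq> 0" "x \<in> regP R b" "x \<noteq> ctr R b"
  defines "y \<equiv> x - ctr R b"
  shows "(ffun R b has_derivative
    (\<lambda>h. 2 * ffun R b x / norm y ^ 2 * (y \<bullet> h + ffun R b x / norm b ^ 2 * (b \<bullet> h)))) (at x)"
proof -
  define D where "D = 2 * norm b ^ 2 - R ^ 2 - 2 * (b \<bullet> x)"
  have "D > 0" using assms(2) by (simp add: regP_def D_def)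
  have ffun_inner: "ffun R b = (\<lambda>z. norm b ^ 2 * ((z - ctr R b) \<bullet> (z - ctr R b))
      / (2 * norm b ^ 2 - R ^ 2 - 2 * (b \<bullet> z)))"
    by (simp add: ffun_def power2_norm_eq_inner fun_eq_iff)
  have "((\<lambda>z. z - ctr R b) has_derivative (\<lambda>h. h)) (at x)"
    by (auto intro!: derivative_eq_intros)
  then have deriv: "(ffun R b has_derivative (\<lambda>h. (norm b ^ 2 * (y \<bullet> h + h \<bullet> y) * D
      - norm b ^ 2 * (y \<bullet> y) * (0 - 2 * (b \<bullet> h))) / (D * D))) (at x)"
    unfolding ffun_inner y_def D_def using \<open>D > 0\<close>[unfolded D_def]
    by (auto intro!: derivative_eq_intros has_derivative_divide' simp: D_def)
  have f_eq: "ffun R b x = norm b ^ 2 * norm y ^ 2 / D" and "y \<noteq> 0"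
    using assms(3) by (simp_all add: ffun_def D_def y_def)
  show ?thesis
    unfolding f_eq using deriv \<open>D > 0\<close> \<open>y \<noteq> 0\<close> assms(1)
    by (elim has_derivative_eq_rhs) (auto simp: fun_eq_iff field_simps dot_square_norm
        inner_commute power2_eq_square)
qed

lemma Ffun_has_real_derivative:
  assumes "k \<ge> 2" "t > 0"
  shows "(Ffun k has_real_derivative - (1 / 2) * t powr - (real k / 2)) (at t)"
proof (cases "k \<ge> 3")
  case True
  have "((\<lambda>t. 1 / (real k - 2) * t powr (- (real k - 2) / 2)) has_real_derivative
      1 / (real k - 2) * (- (real k - 2) / 2 * t powr (- (real k - 2) / 2 - 1))) (at t)"
    by (intro DERIV_cmult has_real_derivative_powr assms(2))
  moreover have "1 / (real k - 2) * (- (real k - 2) / 2 * t powr (- (real k - 2) / 2 - 1))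
      = - (1 / 2) * t powr - (real k / 2)"
    using True by (simp add: field_simps)
  ultimately show ?thesis
    using True by (simp add: Ffun_def[abs_def])
next
  case False
  then have "k = 2" using assms(1) by simp
  have "((\<lambda>t. - (1 / 2) * ln t) has_real_derivative - (1 / 2) * (1 / t)) (at t)"
    by (intro DERIV_cmult DERIV_ln_divide assms(2))
  then show ?thesis
    using \<open>k = 2\<close> assms(2) by (simp add: Ffun_def[abs_def] powr_minus_divide)
qed

lemma Wfield_has_derivative:
  fixes b x :: "'a::euclidean_space"
  assumes "b \<noteq> 0" "k \<ge> 2" "x \<in> regP R b" "x \<noteq> ctr R b"
  defines "y \<equiv> x - ctr R b" and "P \<equiv> ffun R b x powr - (real k / 2)"
    and "s \<equiv> ffun R b x / norm b ^ 2"
  shows "(Wfield k R b has_derivative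
    (\<lambda>h. (P / real k) *\<^sub>R h + ((P / norm y ^ 2) *\<^sub>R (y + s *\<^sub>R b) \<bullet> h) *\<^sub>R (s *\<^sub>R b - y))) (at x)"
proof -
  define f where "f = ffun R b x"
  define df where "df = (\<lambda>h. 2 * f / norm y ^ 2 * (y \<bullet> h + s * (b \<bullet> h)))"
  have "f > 0" using ffun_pos assms(1,3,4) by (simp add: f_def)
  have dF: "(ffun R b has_derivative df) (at x)"
    using ffun_has_derivative[OF assms(1,3,4)] by (simp add: df_def f_def s_def y_def)
  have d_powr: "((\<lambda>z. ffun R b z powr - (real k / 2)) has_derivative
      (\<lambda>h. df h * (- (real k / 2) * f powr (- (real k / 2) - 1)))) (at x)"
    using DERIV_compose_FDERIV[OF has_real_derivative_powr[OF \<open>f > 0\<close>[unfolded f_def]] dF]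
    unfolding f_def .
  have d_Ffun: "((\<lambda>z. Ffun k (ffun R b z)) has_derivative (\<lambda>h. df h * (- (1 / 2) * P))) (at x)"
    using DERIV_compose_FDERIV[OF Ffun_has_real_derivative[OF assms(2)] dF] \<open>f > 0\<close>
    by (simp add: f_def P_def)
  have "norm b ^ 2 \<noteq> 0" using assms(1) by simp
  have powr_eq: "f powr (- (real k / 2) - 1) = P / f"
    using \<open>f > 0\<close> by (simp add: P_def f_def powr_diff)
  note chain = has_derivative_diff[OF
      has_derivative_scaleR[OF has_derivative_mult_right[OF d_powr]
        has_derivative_diff[OF has_derivative_ident has_derivative_const]]
      has_derivative_scaleR[OF has_derivative_divide'[OF d_Ffun has_derivative_const \<open>norm b ^ 2 \<noteq> 0\<close>]
        has_derivative_const]]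
  show ?thesis
    unfolding Wfield_def[abs_def]
  proof (rule has_derivative_eq_rhs[OF chain], rule ext)
    fix h
    define t where "t = (y + s *\<^sub>R b) \<bullet> h"
    have dfh: "df h = 2 * f / norm y ^ 2 * t"
      by (simp add: df_def t_def inner_add_left)
    have c_y: "1 / real k * (df h * (- (real k / 2) * f powr (- (real k / 2) - 1)))
        = - (P / norm y ^ 2 * t)"
      using \<open>f > 0\<close> assms(2) by (simp add: dfh powr_eq)
    have c_b: "(df h * (- (1 / 2) * P) * norm b ^ 2 - Ffun k f * 0) / (norm b ^ 2 * norm b ^ 2)
        = - (P / norm y ^ 2 * t * s)"
      using \<open>norm b ^ 2 \<noteq> 0\<close>
      by (simp add: dfh s_def f_def[symmetric] field_simps power4_eq_xxxx power2_eq_square)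
    have folds: "ffun R b x = f" "f powr - (real k / 2) = P" "x - ctr R b = y"
      "(P / norm y ^ 2) *\<^sub>R (y + s *\<^sub>R b) \<bullet> h = P / norm y ^ 2 * t"
      by (simp_all add: f_def P_def y_def t_def)
    show "(1 / real k * ffun R b x powr - (real k / 2)) *\<^sub>R (h - 0)
        + (1 / real k * (df h * (- (real k / 2) * f powr (- (real k / 2) - 1)))) *\<^sub>R (x - ctr R b)
        - ((Ffun k (ffun R b x) / norm b ^ 2) *\<^sub>R 0
          + ((df h * (- (1 / 2) * P) * norm b ^ 2 - Ffun k (ffun R b x) * 0)
            / (norm b ^ 2 * norm b ^ 2)) *\<^sub>R b)
      = (P / real k) *\<^sub>R h + ((P / norm y ^ 2) *\<^sub>R (y + s *\<^sub>R b) \<bullet> h) *\<^sub>R (s *\<^sub>R b - y)"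
      unfolding folds c_y c_b by (simp add: algebra_simps)
  qed
qed

lemma tdiv_identity_plus_rank_one:
  fixes B :: "'a::euclidean_space set"
  assumes "(X has_derivative (\<lambda>h. c *\<^sub>R h + (u \<bullet> h) *\<^sub>R v)) (at x)" "\<forall>e\<in>B. norm e = 1"
  shows "tdiv B X x = c * card B + (\<Sum>e\<in>B. (u \<bullet> e) * (v \<bullet> e))"
proof -
  have "frechet_derivative X (at x) e \<bullet> e = c + (u \<bullet> e) * (v \<bullet> e)" if "e \<in> B" for e
    using assms(2) that
    by (simp add: frechet_derivative_at[OF assms(1), symmetric] inner_add_left inner_add_right inner_commute
        norm_eq_1[symmetric])
  then show ?thesis
    by (simp add: tdiv_def sum.distrib)
qed

lemma tdiv_Wfield:
  fixes b x :: "'a::euclidean_space" and B T :: "'a set"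
  assumes "b \<noteq> 0" "k \<ge> 2" "x \<in> regP R b" "x \<noteq> ctr R b"
    and "finite B" "pairwise orthogonal B" "\<forall>e\<in>B. norm e = 1" "span B = T" "card B = k"
  defines "y \<equiv> x - ctr R b" and "P \<equiv> ffun R b x powr - (real k / 2)"
    and "s \<equiv> ffun R b x / norm b ^ 2"
  shows "tdiv B (Wfield k R b) x
    = P + P / norm y ^ 2 * (s ^ 2 * norm (tproj T b) ^ 2 - norm (tproj T y) ^ 2)"
proof -
  have "(\<Sum>e\<in>B. ((P / norm y ^ 2) *\<^sub>R (y + s *\<^sub>R b) \<bullet> e) * ((s *\<^sub>R b - y) \<bullet> e))
      = (\<Sum>e\<in>B. P / norm y ^ 2 * (s ^ 2 * (b \<bullet> e) ^ 2 - (y \<bullet> e) ^ 2))"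
    by (intro sum.cong) (simp_all add: inner_add_left inner_diff_left power2_eq_square
        add_divide_distrib[symmetric] diff_divide_distrib[symmetric] algebra_simps)
  also have "\<dots> = P / norm y ^ 2 * (s ^ 2 * (\<Sum>e\<in>B. (b \<bullet> e) ^ 2) - (\<Sum>e\<in>B. (y \<bullet> e) ^ 2))"
    by (simp only: sum_distrib_left sum_subtractf[symmetric])
  finally show ?thesis
    using tdiv_identity_plus_rank_one[OF Wfield_has_derivative[OF assms(1-4)] assms(7)]
      norm_tproj_power2[OF assms(5-8)] assms(2,9)
    by (simp add: y_def P_def s_def)
qed

theorem mainTheorem6:
  fixes R :: real and b x :: "'a::euclidean_space" and k :: nat
    and T B :: "'a set"
  assumes "R > 0" and "b \<noteq> 0" and "k \<ge> 2"
    and "x \<in> regP R b" and "x \<noteq> ctr R b"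
    and "subspace T" and "dim T = k"
    and "finite B" and "B \<subseteq> T" and "pairwise orthogonal B"
    and "\<forall>e\<in>B. norm e = 1" and "span B = T"
  shows "Wfield k R b differentiable (at x) \<and>
    tdiv B (Wfield k R b) x =
      ffun R b x powr (- (real k / 2)) * norm (nproj T (x - ctr R b)) ^ 2 / norm (x - ctr R b) ^ 2
      + ffun R b x powr (- (real k - 4) / 2) * norm (tproj T b) ^ 2
          / (norm b ^ 4 * norm (x - ctr R b) ^ 2)"
proof -
  define f y where "f = ffun R b x" and "y = x - ctr R b"
  define P s where "P = f powr - (real k / 2)" and "s = f / norm b ^ 2"
  have "f > 0" using ffun_pos assms(2,4,5) by (simp add: f_def)
  have "card B = k" using card_orthonormal_eq_dim[OF assms(10,11)] assms(7,12) dim_span by metis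
  have "tdiv B (Wfield k R b) x
      = P + P / norm y ^ 2 * (s ^ 2 * norm (tproj T b) ^ 2 - norm (tproj T y) ^ 2)"
    using tdiv_Wfield[OF assms(2-5,8,10-12) \<open>card B = k\<close>] by (simp add: f_def y_def P_def s_def)
  also have "\<dots> = P + P / norm y ^ 2
      * (s ^ 2 * norm (tproj T b) ^ 2 - (norm y ^ 2 - norm (nproj T y) ^ 2))"
    using norm_nproj_power2[OF assms(8,10-12), of y] by simp
  also have "\<dots> = P * norm (nproj T y) ^ 2 / norm y ^ 2
      + P * f ^ 2 * norm (tproj T b) ^ 2 / (norm b ^ 4 * norm y ^ 2)"
    using assms(2,5) by (simp add: s_def y_def field_simps power4_eq_xxxx)
  also have "P * f ^ 2 = f powr (- (real k / 2) + 2)"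
    unfolding powr_add P_def using \<open>f > 0\<close> by simp
  also have "- (real k / 2) + 2 = - (real k - 4) / 2"
    by (simp add: field_simps)
  finally show ?thesis
    using Wfield_has_derivative[OF assms(2-5)] by (auto simp: differentiable_def f_def y_def P_def)
qed

end
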